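(* Let $R$ be an exchange ring and $e_1,\dots,e_n\in R$ idempotents. Then there exists an idempotent $e\in e_1R+\cdots+e_nR$ such that $e_1R\subseteq eR$ and $e_iR$ is isomorphic to a direct summand of $eR$ for all $i$. In particular, $ReR=Re_1R+\cdots+Re_nR$.
   Context: All rings are unital and modules are right modules. A ring $R$ is an exchange ring if the right module $R_R$ has the finite exchange property: for every module $A$ and internal direct sum decompositions $A=M'\oplus N=A_1\oplus\cdots\oplus A_n$ with $M'\cong R_R$, there exist submodules $A_i'\subseteq A_i$ with $A=M'\oplus A_1'\oplus\cdots\oplus A_n'$ (equivalently: for every $a\in R$ there is an idempotent $e\in aR$ with $1-e\in(1-a)R$). *)

theory Defs
  imports Main
begin

text \<open>Rings: type class ring_1 (unital, not necessarily commutative).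
  Right R-modules that occur are right ideals of R, i.e. submodules of R_R.\<close>

definition idem :: "'a::ring_1 \<Rightarrow> bool" where
  "idem e \<longleftrightarrow> e * e = e"

definition rideal :: "'a::ring_1 \<Rightarrow> 'a set" where
  "rideal a = {a * r | r. True}"

text \<open>Exchange ring, via the elementwise characterization (Nicholson):
  for every a there is an idempotent e in aR with 1 - e in (1 - a)R.\<close>
definition exchange_ring :: "'a::ring_1 itself \<Rightarrow> bool" where
  "exchange_ring TYPE('a) \<longleftrightarrow>
     (\<forall>a::'a. \<exists>e. idem e \<and> e \<in> rideal a \<and> 1 - e \<in> rideal (1 - a))"

definition right_submodule :: "'a::ring_1 set \<Rightarrow> bool" where
  "right_submodule A \<longleftrightarrow> 0 \<in> A \<and> (\<forall>x\<in>A. \<forall>y\<in>A. x + y \<in> A)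
      \<and> (\<forall>x\<in>A. \<forall>r. x * r \<in> A)"

definition rmod_iso :: "'a::ring_1 set \<Rightarrow> 'a set \<Rightarrow> bool" where
  "rmod_iso A B \<longleftrightarrow> (\<exists>f. bij_betw f A B
      \<and> (\<forall>x\<in>A. \<forall>y\<in>A. f (x + y) = f x + f y)
      \<and> (\<forall>x\<in>A. \<forall>r. f (x * r) = f x * r))"

definition direct_summand :: "'a::ring_1 set \<Rightarrow> 'a set \<Rightarrow> bool" where
  "direct_summand A M \<longleftrightarrow> right_submodule A \<and> A \<subseteq> M \<and>
     (\<exists>C. right_submodule C \<and> C \<subseteq> M \<and> A \<inter> C = {0} \<and> M = {a + c | a c. a \<in> A \<and> c \<in> C})"

definition ideal_gen :: "'a::ring_1 set \<Rightarrow> 'a set" where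
  "ideal_gen S = {(\<Sum>j<m. r j * s j * t j) | (m::nat) r s t. \<forall>j<m. s j \<in> S}"

end

theory Submission
  imports Defs
begin

text \<open>
  For idempotents write \<open>f \<lesssim> g\<close> (\<open>iso_summand f g\<close>) if there are \<open>x \<in> gRf\<close> and
  \<open>y \<in> fRg\<close> with \<open>yx = f\<close>; then left multiplication by \<open>x\<close> maps \<open>fR\<close> isomorphically
  onto \<open>xyR\<close>, a direct summand of \<open>gR\<close>, and \<open>f = ygx \<in> RgR\<close>.
  For two idempotents \<open>e, f\<close>, the exchange property of the corner ring \<open>uRu\<close>, \<open>u = 1 - e\<close>,
  applied to \<open>ufu\<close> yields an idempotent \<open>h \<in> eR + fR\<close> with \<open>he = e\<close> and \<open>fh = f\<close>, so
  \<open>e \<lesssim> h\<close> and \<open>f \<lesssim> h\<close>. Adding \<open>e\<^sub>1, \<dots>, e\<^sub>n\<close> one at a time gives \<open>e \<in> \<Sum> e\<^sub>iR\<close> with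
  \<open>e\<^sub>1R \<subseteq> eR\<close> and \<open>e\<^sub>i \<lesssim> e\<close> for all \<open>i\<close>, hence \<open>ReR = \<Sum> Re\<^sub>iR\<close>.
\<close>

lemma mem_rideal_iff: "x \<in> rideal a \<longleftrightarrow> (\<exists>r. x = a * r)"
  unfolding rideal_def by blast

lemma right_submodule_rideal: "right_submodule (rideal a)"
  unfolding right_submodule_def
proof (intro conjI ballI allI)
  show "0 \<in> rideal a" unfolding mem_rideal_iff by (metis mult_zero_right)
next
  fix x y assume "x \<in> rideal a" "y \<in> rideal a"
  then show "x + y \<in> rideal a" unfolding mem_rideal_iff by (metis distrib_left)
next
  fix x s assume "x \<in> rideal a"
  then show "x * s \<in> rideal a" unfolding mem_rideal_iff by (metis mult.assoc)
qed

lemma rideal_subset_rideal: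
  assumes "g * a = a" shows "rideal a \<subseteq> rideal g"
  using assms unfolding mem_rideal_iff subset_iff by (metis mult.assoc)

lemma direct_summand_rideal:
  assumes gg: "g * g = g" and pp: "p * p = p" and gp: "g * p = p" and pg: "p * g = p"
  shows "direct_summand (rideal p) (rideal g)"
  unfolding direct_summand_def
proof (intro conjI exI[of _ "rideal (g - p)"])
  have gq: "g * (g - p) = g - p" using gg gp by (simp add: right_diff_distrib)
  have pq: "p * (g - p) = 0" using pp pg by (simp add: right_diff_distrib)
  show "right_submodule (rideal p)" "right_submodule (rideal (g - p))"
    by (rule right_submodule_rideal)+
  show p_sub: "rideal p \<subseteq> rideal g" using gp by (rule rideal_subset_rideal)
  show q_sub: "rideal (g - p) \<subseteq> rideal g" using gq by (rule rideal_subset_rideal)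
  show "rideal p \<inter> rideal (g - p) = {0}"
  proof safe
    fix z assume "z \<in> rideal p" "z \<in> rideal (g - p)"
    then obtain a c where a: "z = p * a" and c: "z = (g - p) * c" unfolding mem_rideal_iff by blast
    have "z = p * z" unfolding a by (simp add: pp flip: mult.assoc)
    also have "\<dots> = 0" unfolding c by (simp add: pq flip: mult.assoc)
    finally show "z = 0" .
  qed (use right_submodule_rideal right_submodule_def in blast)+
  show "rideal g = {a + c | a c. a \<in> rideal p \<and> c \<in> rideal (g - p)}"
  proof safe
    fix z assume "z \<in> rideal g"
    then obtain t where "z = g * t" unfolding mem_rideal_iff by blast
    then have "z = p * t + (g - p) * t" by (simp add: algebra_simps)
    then show "\<exists>a c. z = a + c \<and> a \<in> rideal p \<and> c \<in> rideal (g - p)"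
      unfolding mem_rideal_iff by blast
  next
    fix a c assume "a \<in> rideal p" "c \<in> rideal (g - p)"
    then have "a \<in> rideal g" "c \<in> rideal g" using p_sub q_sub by blast+
    then show "a + c \<in> rideal g"
      using right_submodule_rideal unfolding right_submodule_def by blast
  qed
qed

lemma rmod_iso_rideal_mult:
  assumes ff: "f * f = f" and xf: "x * f = x" and fy: "f * y = y" and yx: "y * x = f"
  shows "rmod_iso (rideal f) (rideal (x * y))"
  unfolding rmod_iso_def
proof (intro exI[of _ "\<lambda>z. x * z"] conjI ballI allI)
  show "bij_betw ((*) x) (rideal f) (rideal (x * y))"
  proof (rule bij_betw_imageI)
    have f_fixes: "f * z = z" if "z \<in> rideal f" for z
      using that ff unfolding mem_rideal_iff by (auto simp flip: mult.assoc)
    show "inj_on ((*) x) (rideal f)"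
    proof (rule inj_onI)
      fix a c assume "a \<in> rideal f" "c \<in> rideal f" "x * a = x * c"
      then have "y * x * a = y * x * c" by (simp add: mult.assoc)
      then show "a = c" using f_fixes \<open>a \<in> rideal f\<close> \<open>c \<in> rideal f\<close> yx by simp
    qed
    show "(*) x ` rideal f = rideal (x * y)"
    proof safe
      fix z assume "z \<in> rideal f"
      then obtain s where "z = f * s" unfolding mem_rideal_iff by blast
      then have "x * z = x * (y * x) * s" unfolding yx by (simp add: mult.assoc)
      then have "x * z = x * y * (x * s)" by (simp add: mult.assoc)
      then show "x * z \<in> rideal (x * y)" unfolding mem_rideal_iff by blast
    next
      fix z assume "z \<in> rideal (x * y)"
      then obtain s where "z = x * (f * (y * s))" unfolding mem_rideal_iff
        using fy by (auto simp flip: mult.assoc)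
      moreover have "f * (y * s) \<in> rideal f" unfolding mem_rideal_iff by blast
      ultimately show "z \<in> (*) x ` rideal f" by blast
    qed
  qed
qed (simp_all add: distrib_left mult.assoc)

definition iso_summand :: "'a::ring_1 \<Rightarrow> 'a \<Rightarrow> bool" where
  "iso_summand f g \<longleftrightarrow>
     (\<exists>x y. g * x = x \<and> x * f = x \<and> f * y = y \<and> y * g = y \<and> y * x = f)"

lemma iso_summandI:
  assumes ff: "f * f = f" and hh: "h * h = h" and fhf: "f * h * f = f"
  shows "iso_summand f h"
  unfolding iso_summand_def
proof (intro exI conjI)
  show "h * (h * f) = h * f" "h * f * f = h * f" "f * (f * h) = f * h" "f * h * h = f * h"
    using ff hh by (simp_all add: mult.assoc flip: mult.assoc[of h h] mult.assoc[of f f])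
  show "f * h * (h * f) = f" using hh fhf by (simp add: mult.assoc flip: mult.assoc[of h h])
qed

lemma iso_summand_trans:
  assumes "iso_summand f g" and "iso_summand g k"
  shows "iso_summand f k"
proof -
  obtain x y where "g * x = x" "x * f = x" "f * y = y" "y * g = y" "y * x = f"
    using assms(1) unfolding iso_summand_def by blast
  moreover obtain x' y' where "k * x' = x'" "x' * g = x'" "g * y' = y'" "y' * k = y'" "y' * x' = g"
    using assms(2) unfolding iso_summand_def by blast
  ultimately have "k * (x' * x) = x' * x" "(x' * x) * f = x' * x" "f * (y * y') = y * y'"
    "(y * y') * k = y * y'" "(y * y') * (x' * x) = f"
    by (simp_all flip: mult.assoc) (simp_all add: mult.assoc flip: mult.assoc[of y' x'])
  then show ?thesis unfolding iso_summand_def by blast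
qed

lemma iso_summand_direct_summand:
  assumes ff: "f * f = f" and gg: "g * g = g" and fg: "iso_summand f g"
  shows "\<exists>A. direct_summand A (rideal g) \<and> rmod_iso (rideal f) A"
proof -
  obtain x y where gx: "g * x = x" and xf: "x * f = x" and fy: "f * y = y" and yg: "y * g = y"
    and yx: "y * x = f"
    using fg unfolding iso_summand_def by blast
  have "(x * y) * (x * y) = x * y" using yx fy by (simp add: mult.assoc flip: mult.assoc[of y x y])
  moreover have "g * (x * y) = x * y" "(x * y) * g = x * y"
    using gx yg by (simp_all add: mult.assoc flip: mult.assoc[of g x])
  ultimately have "direct_summand (rideal (x * y)) (rideal g)"
    using direct_summand_rideal gg by blast
  moreover have "rmod_iso (rideal f) (rideal (x * y))"
    using rmod_iso_rideal_mult ff xf fy yx by blast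
  ultimately show ?thesis by blast
qed

lemma sum_lessThan_add:
  "(\<Sum>i<m + k::nat. f i) = (\<Sum>i<m. f i) + (\<Sum>i<k. f (m + i))"
  by (induction k) (simp_all add: add.assoc)

lemma mem_ideal_gen: "s \<in> S \<Longrightarrow> a * s * c \<in> ideal_gen S"
  unfolding ideal_gen_def
  by (intro CollectI exI[of _ 1] exI[of _ "\<lambda>_. a"] exI[of _ "\<lambda>_. s"] exI[of _ "\<lambda>_. c"]) auto

lemma ideal_gen_add:
  assumes "x \<in> ideal_gen S" and "y \<in> ideal_gen S"
  shows "x + y \<in> ideal_gen S"
proof -
  obtain m :: nat and r s t where x: "x = (\<Sum>j<m. r j * s j * t j)" and s: "\<forall>j<m. s j \<in> S"
    using assms(1) unfolding ideal_gen_def by blast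
  obtain m' :: nat and r' s' t' where y: "y = (\<Sum>j<m'. r' j * s' j * t' j)"
    and s': "\<forall>j<m'. s' j \<in> S"
    using assms(2) unfolding ideal_gen_def by blast
  define join :: "(nat \<Rightarrow> 'a) \<Rightarrow> (nat \<Rightarrow> 'a) \<Rightarrow> nat \<Rightarrow> 'a"
    where "join u v j = (if j < m then u j else v (j - m))" for u v j
  have "x + y = (\<Sum>j<m + m'. join r r' j * join s s' j * join t t' j)"
    unfolding sum_lessThan_add x y join_def by simp
  moreover have "\<forall>j<m + m'. join s s' j \<in> S" using s s' unfolding join_def by auto
  ultimately show ?thesis unfolding ideal_gen_def by blast
qed

lemma ideal_gen_mult:
  assumes "x \<in> ideal_gen S" shows "a * x * c \<in> ideal_gen S"
proof -
  obtain m :: nat and r s t where x: "x = (\<Sum>j<m. r j * s j * t j)" and s: "\<forall>j<m. s j \<in> S"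
    using assms unfolding ideal_gen_def by blast
  have "a * x * c = (\<Sum>j<m. (a * r j) * s j * (t j * c))"
    unfolding x sum_distrib_left sum_distrib_right by (simp add: mult.assoc)
  then show ?thesis using s unfolding ideal_gen_def
    by (intro CollectI exI[of _ m] exI[of _ "\<lambda>j. a * r j"] exI[of _ s] exI[of _ "\<lambda>j. t j * c"])
      simp
qed

lemma ideal_gen_sum:
  "(\<And>j. j < (m::nat) \<Longrightarrow> f j \<in> ideal_gen S) \<Longrightarrow> (\<Sum>j<m. f j) \<in> ideal_gen S"
proof (induction m)
  case 0
  show ?case unfolding ideal_gen_def by (rule CollectI, rule exI[of _ 0]) simp
next
  case (Suc m)
  then show ?case by (simp add: ideal_gen_add)
qed

lemma ideal_gen_minimal:
  assumes "T \<subseteq> ideal_gen S" shows "ideal_gen T \<subseteq> ideal_gen S"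
proof
  fix x assume "x \<in> ideal_gen T"
  then obtain m :: nat and r s t where x: "x = (\<Sum>j<m. r j * s j * t j)" and s: "\<forall>j<m. s j \<in> T"
    unfolding ideal_gen_def by blast
  have "r j * s j * t j \<in> ideal_gen S" if "j < m" for j
    using that s assms ideal_gen_mult by blast
  then show "x \<in> ideal_gen S" unfolding x by (rule ideal_gen_sum)
qed

lemma iso_summand_mem_ideal_gen:
  assumes "iso_summand f g" shows "f \<in> ideal_gen {g}"
proof -
  obtain x y where "y * g = y" "y * x = f" using assms unfolding iso_summand_def by blast
  then have "f = y * g * x" by simp
  then show ?thesis using mem_ideal_gen[of g "{g}" y x] by simp
qed

lemma exchange_ring_corner:
  fixes u a :: "'a::ring_1"
  assumes ex: "exchange_ring TYPE('a)" and uu: "u * u = u" and ua: "u * a = a"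
  shows "\<exists>\<epsilon>. \<epsilon> * \<epsilon> = \<epsilon> \<and> u * \<epsilon> = \<epsilon> \<and> \<epsilon> * u = \<epsilon>
      \<and> \<epsilon> \<in> rideal a \<and> u - \<epsilon> \<in> rideal (u - a)"
proof -
  have "1 - (a + (1 - u)) = u - a" by simp
  then obtain p r s where pp: "p * p = p" and pr: "p = (a + (1 - u)) * r"
    and ps: "1 - p = (u - a) * s"
    using ex unfolding exchange_ring_def idem_def mem_rideal_iff by metis
  have "(1 - u) * (1 - p) = 0" unfolding ps using uu ua
    by (simp add: algebra_simps flip: mult.assoc)
  then have up: "(1 - u) * p = 1 - u" by (simp add: algebra_simps)
  have pup: "p * u * p = p * u"
  proof -
    have "p * u * p = p * p - p * ((1 - u) * p)" by (simp add: algebra_simps)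
    also have "\<dots> = p * u" unfolding pp up by (simp add: algebra_simps)
    finally show ?thesis .
  qed
  define \<epsilon> where "\<epsilon> = u * p * u"
  have "\<epsilon> * \<epsilon> = u * (p * u * p) * u"
    unfolding \<epsilon>_def using uu by (simp add: mult.assoc flip: mult.assoc[of u u])
  also have "\<dots> = \<epsilon>" unfolding pup \<epsilon>_def using uu by (simp add: mult.assoc)
  finally have "\<epsilon> * \<epsilon> = \<epsilon>" .
  moreover have "u * \<epsilon> = \<epsilon>" "\<epsilon> * u = \<epsilon>"
    unfolding \<epsilon>_def using uu by (simp_all add: mult.assoc flip: mult.assoc[of u u])
  moreover have "\<epsilon> = a * (r * u)"
    unfolding \<epsilon>_def pr using uu ua by (simp add: algebra_simps flip: mult.assoc)
  moreover have "u - \<epsilon> = (u - a) * (s * u)"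
  proof -
    have "u - \<epsilon> = u * (1 - p) * u" unfolding \<epsilon>_def using uu by (simp add: algebra_simps)
    also have "\<dots> = u * (u - a) * s * u" unfolding ps by (simp add: mult.assoc)
    also have "u * (u - a) = u - a" using uu ua by (simp add: algebra_simps)
    finally show ?thesis by (simp add: mult.assoc)
  qed
  ultimately show ?thesis unfolding mem_rideal_iff by blast
qed

lemma exchange_ring_idem_cover:
  fixes e f :: "'a::ring_1"
  assumes ex: "exchange_ring TYPE('a)" and ee: "e * e = e" and ff: "f * f = f"
  shows "\<exists>h c d. h * h = h \<and> h * e = e \<and> f * h = f \<and> h = e * c + f * d"
proof -
  define u where "u = 1 - e"
  have uu: "u * u = u" and ue: "u * e = 0"
    using ee by (simp_all add: u_def algebra_simps)
  obtain \<epsilon> r z where \<epsilon>\<epsilon>: "\<epsilon> * \<epsilon> = \<epsilon>" and u\<epsilon>: "u * \<epsilon> = \<epsilon>" and \<epsilon>u: "\<epsilon> * u = \<epsilon>"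
    and \<epsilon>r: "\<epsilon> = u * f * u * r" and \<epsilon>z: "u - \<epsilon> = (u - u * f * u) * z"
  proof -
    have "u * (u * f * u) = u * f * u" using uu by (simp flip: mult.assoc)
    then show thesis
      using that exchange_ring_corner[OF ex uu, of "u * f * u"] unfolding mem_rideal_iff by blast
  qed
  define v where "v = u - \<epsilon>"
  have vv: "v * v = v" and vu: "v * u = v"
    using uu \<epsilon>\<epsilon> u\<epsilon> \<epsilon>u by (simp_all add: v_def algebra_simps)
  have "\<epsilon> * e = 0" using \<epsilon>u ue by (metis mult.assoc mult_zero_right)
  then have ve: "v * e = 0" using ue by (simp add: v_def left_diff_distrib)
  define y where "y = u * z"
  have "u * (1 - f) * y = (u - u * f * u) * z"
    unfolding y_def using uu by (simp add: algebra_simps flip: mult.assoc)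
  then have uw: "u * (1 - f) * y = v" using \<epsilon>z by (simp add: v_def)
  define w where "w = (1 - f) * y * v"
  have "v * ((1 - f) * y) = v * (u * (1 - f) * y)" using vu by (metis mult.assoc)
  then have "v * ((1 - f) * y) = v" using uw vv by simp
  then have ww: "w * w = w" unfolding w_def using vv by (metis mult.assoc)
  have "f * (1 - f) = 0" using ff by (simp add: algebra_simps)
  then have fw: "f * w = 0" unfolding w_def by (simp flip: mult.assoc)
  have we: "w * e = 0" unfolding w_def using ve by (simp add: mult.assoc)
  have "u * w = v" unfolding w_def using uw vv by (simp flip: mult.assoc)
  define h where "h = 1 - w"
  have "h * h = h" "h * e = e" "f * h = f"
    unfolding h_def using ww we fw by (simp_all add: algebra_simps)
  moreover have "h = e * (h - f * (u * r)) + f * (u * r)"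
  proof -
    have "u * h = \<epsilon>" unfolding h_def using \<open>u * w = v\<close> by (simp add: v_def algebra_simps)
    also have "\<dots> = (1 - e) * (f * (u * r))" using \<epsilon>r by (simp add: u_def mult.assoc)
    finally have uh: "u * h = (1 - e) * (f * (u * r))" .
    have "h = e * h + u * h" by (simp add: u_def algebra_simps)
    also have "\<dots> = e * (h - f * (u * r)) + f * (u * r)" unfolding uh by (simp add: algebra_simps)
    finally show ?thesis .
  qed
  ultimately show ?thesis by blast
qed

lemma exchange_ring_idem_cover_family:
  fixes es :: "nat \<Rightarrow> 'a::ring_1"
  assumes ex: "exchange_ring TYPE('a)" and idem_es: "\<And>i. i \<le> k \<Longrightarrow> es i * es i = es i"
  shows "\<exists>g r. g * g = g \<and> g = (\<Sum>i<Suc k. es i * r i) \<and> g * es 0 = es 0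
      \<and> (\<forall>i\<le>k. iso_summand (es i) g)"
  using idem_es
proof (induction k)
  case 0
  then have "es 0 * es 0 = es 0" by simp
  moreover from this have "iso_summand (es 0) (es 0)" by (intro iso_summandI) simp_all
  ultimately show ?case by (intro exI[of _ "es 0"] exI[of _ "\<lambda>_. 1"]) simp
next
  case (Suc k)
  have "es i * es i = es i" if "i \<le> k" for i using Suc.prems that by simp
  with Suc.IH obtain g r where gg: "g * g = g" and g: "g = (\<Sum>i<Suc k. es i * r i)"
    and g0: "g * es 0 = es 0" and below_g: "\<forall>i\<le>k. iso_summand (es i) g"
    by blast
  have ee: "es (Suc k) * es (Suc k) = es (Suc k)" using Suc.prems by simp
  obtain h c d where hh: "h * h = h" and hg: "h * g = g" and eh: "es (Suc k) * h = es (Suc k)"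
    and h: "h = g * c + es (Suc k) * d"
    using exchange_ring_idem_cover[OF ex gg ee] by blast
  define r' where "r' i = (if i \<le> k then r i * c else d)" for i
  have "h = (\<Sum>i<Suc (Suc k). es i * r' i)"
    unfolding h g r'_def by (simp add: sum_distrib_right distrib_right mult.assoc)
  moreover have "h * es 0 = es 0"
  proof -
    have "h * es 0 = h * g * es 0" using g0 by (simp add: mult.assoc)
    then show ?thesis using hg g0 by simp
  qed
  moreover have "iso_summand (es i) h" if "i \<le> Suc k" for i
  proof (cases "i \<le> k")
    case True
    have "iso_summand g h" using gg hh hg by (intro iso_summandI) (simp_all add: mult.assoc)
    then show ?thesis using below_g True iso_summand_trans by blast
  next
    case False
    then have "i = Suc k" using that by simp
    then show ?thesis using ee hh eh by (intro iso_summandI) simp_all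
  qed
  ultimately show ?case using hh by (intro exI[of _ h] exI[of _ r']) simp
qed

theorem lemma2p1:
  fixes es :: "nat \<Rightarrow> 'a::ring_1" and n :: nat
  assumes "exchange_ring TYPE('a)"
    and "0 < n"
    and "\<forall>i<n. idem (es i)"
  shows "\<exists>e. idem e
      \<and> e \<in> {(\<Sum>i<n. es i * r i) | r. True}
      \<and> rideal (es 0) \<subseteq> rideal e
      \<and> (\<forall>i<n. \<exists>A. direct_summand A (rideal e) \<and> rmod_iso (rideal (es i)) A)
      \<and> ideal_gen {e} = ideal_gen (es ` {..<n})"
proof -
  obtain k where n: "n = Suc k" using \<open>0 < n\<close> gr0_implies_Suc by blast
  have idem_es: "es i * es i = es i" if "i < n" for i
    using assms(3) that unfolding idem_def by blast
  then obtain g r where gg: "g * g = g" and g: "g = (\<Sum>i<n. es i * r i)" and g0: "g * es 0 = es 0"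
    and below_g: "\<forall>i<n. iso_summand (es i) g"
    using exchange_ring_idem_cover_family[OF assms(1), of k es] unfolding n less_Suc_eq_le by blast
  have "g \<in> ideal_gen (es ` {..<n})"
    unfolding g using mem_ideal_gen[of _ "es ` {..<n}" 1] by (intro ideal_gen_sum) simp
  moreover have "es ` {..<n} \<subseteq> ideal_gen {g}" using below_g iso_summand_mem_ideal_gen by blast
  ultimately have "ideal_gen {g} = ideal_gen (es ` {..<n})"
    by (intro equalityI ideal_gen_minimal) simp_all
  moreover have "\<exists>A. direct_summand A (rideal g) \<and> rmod_iso (rideal (es i)) A" if "i < n" for i
    using iso_summand_direct_summand idem_es gg below_g that by blast
  ultimately show ?thesis
    unfolding idem_def using gg g rideal_subset_rideal[OF g0] by blast
qed
end
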